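(* Let $S^{-\mathbf T}$ be the signature $S$ with the predicate symbol $\mathbf T$ removed. Let $H^{-\mathbf T}$ be a coherent (i.e. satisfiable) theory over $S^{-\mathbf T}$, and let $H$ be $H^{-\mathbf T}$ together with all instances of the schema $\mathbf T(\mu(\varphi))\leftrightarrow\varphi$ for $\varphi\in\mathcal L_q$. Then $H$ is coherent.
   Context: Let $S_b=(F_b,P_b,V_\infty,\delta_b)$ be a first-order signature ($F_b$ function symbols, constants being $0$-ary functions; $P_b$ predicate symbols; $V_\infty$ an infinite set of variables; $\delta_b$ the arities). Formulas are built from atoms with $\neg,\wedge,\forall$. Fix a finite set $V\subseteq V_\infty$ of "quotable variables". The augmented signature $S$ has predicate symbols $P=P_b\sqcup\{\mathbf{T}\}$ ($\mathbf{T}$ unary) and function symbols $F=F_b\sqcup\underline{F}\sqcup\underline{P}\sqcup\underline{V}\sqcup\{\underline{\wedge},\underline{\neg},\underline{\forall},\mathrm{quote}\}$, where $\underline{F}=\{\underline{f}:f\in F_b\}$ ($\underline f$ has the arity of $f$), $\underline{P}=\{\underline{p}:p\in P\}$ ($\underline p$ is a function symbol with the arity of $p$), $\underline{V}=\{\underline{x}:x\in V\}$ (constants), $\underline\wedge,\underline\forall$ binary, $\underline\neg,\mathrm{quote}$ unary; all new symbols are fresh. The set $\mathcal{Q}$ is the least set of terms containing each $\underline x\in\underline V$ and closed under forming $\underline f(t_1,\dots,t_n)$ ($\underline f\in\underline F$), $\underline p(t_1,\dots,t_n)$ ($\underline p\in\underline P$), $\underline\wedge(t_1,t_2)$, $\underline\neg(t)$,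 $\underline\forall(\underline x,t)$ ($\underline x\in\underline V$), $\mathrm{quote}(t)$, for $t,t_i\in\mathcal{Q}$. The sets $\mathcal{T}_q$, $\mathcal{L}_q$ and the map $\mu$ are defined by simultaneous induction: $\mathcal T_q$ contains every variable $x\in V$, every $f(t_1,\dots,t_n)$ with $f\in F_b$, $t_i\in\mathcal T_q$, and every term $\mu(e)$ with $e\in\mathcal T_q\cup\mathcal L_q$; $\mathcal L_q$ contains $p(t_1,\dots,t_n)$ with $p\in P_b$, $t_i\in\mathcal T_q$, and $\forall x.\varphi$ ($x\in V$), $\neg\varphi$, $\varphi_1\wedge\varphi_2$ for $\varphi,\varphi_i\in\mathcal L_q$ (so formulas of $\mathcal L_q$ never contain $\mathbf T$). The quotation map: $\mu(f(t_1,\dots,t_n))=\underline f(\mu(t_1),\dots,\mu(t_n))$ for $f\in F_b$; $\mu(t_q)=\mathrm{quote}(t_q)$ for $t_q\in\mathcal Q$; $\mu(p(t_1,\dots,t_n))=\underline p(\mu(t_1),\dots,\mu(t_n))$; $\mu(x)=\underline x$; $\mu(\varphi_1\wedge\varphi_2)=\underline\wedge(\mu(\varphi_1),\mu(\varphi_2))$; $\mu(\neg\varphi)=\underline\neg(\mu(\varphi))$; $\mu(\forall x.\varphi)=\underline\forall(\underline x,\mu(\varphi))$. A theory is coherent if it has a model. *)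

theory Defs
  imports Main
begin

text \<open>Base signature: function symbols of type 'f with arity arF, predicate symbols
of type 'p with arity arP, variables of type 'v (V_infinity = UNIV :: 'v set).\<close>

datatype 'p pred = PB 'p | PT

text \<open>Function symbols of S: F_b, underlined F_b, underlined P, underlined V,
underlined and/not/forall, quote.\<close>

datatype ('f,'p,'v) fsym =
    FB 'f | FU 'f | PU "'p pred" | VU 'v | UAnd | UNot | UAll | Quote

datatype ('s,'v) trm = Var 'v | Fn 's "('s,'v) trm list"

datatype ('s,'ps,'v) fm =
    Atom 'ps "('s,'v) trm list"
  | Neg "('s,'ps,'v) fm"
  | Conj "('s,'ps,'v) fm" "('s,'ps,'v) fm"
  | All 'v "('s,'ps,'v) fm"

type_synonym ('f,'p,'v) tm = "(('f,'p,'v) fsym, 'v) trm"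
type_synonym ('f,'p,'v) form = "(('f,'p,'v) fsym, 'p pred, 'v) fm"

fun arity_p :: "('p \<Rightarrow> nat) \<Rightarrow> 'p pred \<Rightarrow> nat" where
  "arity_p arP (PB p) = arP p"
| "arity_p arP PT = 1"

fun arity_f :: "('f \<Rightarrow> nat) \<Rightarrow> ('p \<Rightarrow> nat) \<Rightarrow> ('f,'p,'v) fsym \<Rightarrow> nat" where
  "arity_f arF arP (FB f) = arF f"
| "arity_f arF arP (FU f) = arF f"
| "arity_f arF arP (PU p) = arity_p arP p"
| "arity_f arF arP (VU x) = 0"
| "arity_f arF arP UAnd = 2"
| "arity_f arF arP UNot = 1"
| "arity_f arF arP UAll = 2"
| "arity_f arF arP Quote = 1"

fun sym_ok :: "'v set \<Rightarrow> ('f,'p,'v) fsym \<Rightarrow> bool" where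
  "sym_ok V (VU x) = (x \<in> V)"
| "sym_ok V _ = True"

fun wf_tm :: "'v set \<Rightarrow> ('f \<Rightarrow> nat) \<Rightarrow> ('p \<Rightarrow> nat) \<Rightarrow> ('f,'p,'v) tm \<Rightarrow> bool" where
  "wf_tm V arF arP (Var x) = True"
| "wf_tm V arF arP (Fn s ts) =
     (sym_ok V s \<and> length ts = arity_f arF arP s \<and> (\<forall>t\<in>set ts. wf_tm V arF arP t))"

fun wf_fm :: "'v set \<Rightarrow> ('f \<Rightarrow> nat) \<Rightarrow> ('p \<Rightarrow> nat) \<Rightarrow> ('f,'p,'v) form \<Rightarrow> bool" where
  "wf_fm V arF arP (Atom p ts) =
     (length ts = arity_p arP p \<and> (\<forall>t\<in>set ts. wf_tm V arF arP t))"
| "wf_fm V arF arP (Neg \<phi>) = wf_fm V arF arP \<phi>"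
| "wf_fm V arF arP (Conj \<phi> \<psi>) = (wf_fm V arF arP \<phi> \<and> wf_fm V arF arP \<psi>)"
| "wf_fm V arF arP (All x \<phi>) = wf_fm V arF arP \<phi>"

fun no_T :: "('f,'p,'v) form \<Rightarrow> bool" where
  "no_T (Atom p ts) = (p \<noteq> PT)"
| "no_T (Neg \<phi>) = no_T \<phi>"
| "no_T (Conj \<phi> \<psi>) = (no_T \<phi> \<and> no_T \<psi>)"
| "no_T (All x \<phi>) = no_T \<phi>"

definition iff_fm :: "('s,'ps,'v) fm \<Rightarrow> ('s,'ps,'v) fm \<Rightarrow> ('s,'ps,'v) fm" where
  "iff_fm A B = Conj (Neg (Conj A (Neg B))) (Neg (Conj B (Neg A)))"

inductive_set Qset :: "'v set \<Rightarrow> ('f \<Rightarrow> nat) \<Rightarrow> ('p \<Rightarrow> nat) \<Rightarrow> ('f,'p,'v) tm set"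
  for V arF arP where
  qvar: "x \<in> V \<Longrightarrow> Fn (VU x) [] \<in> Qset V arF arP"
| qfun: "length ts = arF f \<Longrightarrow> (\<forall>t\<in>set ts. t \<in> Qset V arF arP) \<Longrightarrow> Fn (FU f) ts \<in> Qset V arF arP"
| qpred: "length ts = arity_p arP p \<Longrightarrow> (\<forall>t\<in>set ts. t \<in> Qset V arF arP) \<Longrightarrow> Fn (PU p) ts \<in> Qset V arF arP"
| qand: "t1 \<in> Qset V arF arP \<Longrightarrow> t2 \<in> Qset V arF arP \<Longrightarrow> Fn UAnd [t1, t2] \<in> Qset V arF arP"
| qnot: "t \<in> Qset V arF arP \<Longrightarrow> Fn UNot [t] \<in> Qset V arF arP"
| qall: "x \<in> V \<Longrightarrow> t \<in> Qset V arF arP \<Longrightarrow> Fn UAll [Fn (VU x) [], t] \<in> Qset V arF arP"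
| qquote: "t \<in> Qset V arF arP \<Longrightarrow> Fn Quote [t] \<in> Qset V arF arP"

text \<open>On T_q this is exactly the paper's definition: variables x go to
the constant x-underlined, base applications f(t..) go to f-underlined(mu t..), and every
other element of T_q lies in Q and is sent to quote(t). Outside T_q the value is irrelevant.\<close>

fun mu_tm :: "('f,'p,'v) tm \<Rightarrow> ('f,'p,'v) tm" where
  "mu_tm (Var x) = Fn (VU x) []"
| "mu_tm (Fn (FB f) ts) = Fn (FU f) (map mu_tm ts)"
| "mu_tm (Fn (FU f) ts) = Fn Quote [Fn (FU f) ts]"
| "mu_tm (Fn (PU p) ts) = Fn Quote [Fn (PU p) ts]"
| "mu_tm (Fn (VU x) ts) = Fn Quote [Fn (VU x) ts]"
| "mu_tm (Fn UAnd ts) = Fn Quote [Fn UAnd ts]"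
| "mu_tm (Fn UNot ts) = Fn Quote [Fn UNot ts]"
| "mu_tm (Fn UAll ts) = Fn Quote [Fn UAll ts]"
| "mu_tm (Fn Quote ts) = Fn Quote [Fn Quote ts]"

fun mu_fm :: "('f,'p,'v) form \<Rightarrow> ('f,'p,'v) tm" where
  "mu_fm (Atom p ts) = Fn (PU p) (map mu_tm ts)"
| "mu_fm (Neg \<phi>) = Fn UNot [mu_fm \<phi>]"
| "mu_fm (Conj \<phi> \<psi>) = Fn UAnd [mu_fm \<phi>, mu_fm \<psi>]"
| "mu_fm (All x \<phi>) = Fn UAll [Fn (VU x) [], mu_fm \<phi>]"

inductive Tq :: "'v set \<Rightarrow> ('f \<Rightarrow> nat) \<Rightarrow> ('p \<Rightarrow> nat) \<Rightarrow> ('f,'p,'v) tm \<Rightarrow> bool"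
  and Lq :: "'v set \<Rightarrow> ('f \<Rightarrow> nat) \<Rightarrow> ('p \<Rightarrow> nat) \<Rightarrow> ('f,'p,'v) form \<Rightarrow> bool"
  for V arF arP where
  tq_var: "x \<in> V \<Longrightarrow> Tq V arF arP (Var x)"
| tq_fun: "length ts = arF f \<Longrightarrow> (\<forall>t\<in>set ts. Tq V arF arP t) \<Longrightarrow> Tq V arF arP (Fn (FB f) ts)"
| tq_mu_tm: "Tq V arF arP e \<Longrightarrow> Tq V arF arP (mu_tm e)"
| tq_mu_fm: "Lq V arF arP e \<Longrightarrow> Tq V arF arP (mu_fm e)"
| lq_atom: "length ts = arP p \<Longrightarrow> (\<forall>t\<in>set ts. Tq V arF arP t) \<Longrightarrow> Lq V arF arP (Atom (PB p) ts)"
| lq_all: "x \<in> V \<Longrightarrow> Lq V arF arP \<phi> \<Longrightarrow> Lq V arF arP (All x \<phi>)"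
| lq_neg: "Lq V arF arP \<phi> \<Longrightarrow> Lq V arF arP (Neg \<phi>)"
| lq_conj: "Lq V arF arP \<phi> \<Longrightarrow> Lq V arF arP \<psi> \<Longrightarrow> Lq V arF arP (Conj \<phi> \<psi>)"

definition Tschema :: "'v set \<Rightarrow> ('f \<Rightarrow> nat) \<Rightarrow> ('p \<Rightarrow> nat) \<Rightarrow> ('f,'p,'v) form set" where
  "Tschema V arF arP = {iff_fm (Atom PT [mu_fm \<phi>]) \<phi> | \<phi>. Lq V arF arP \<phi>}"

fun eval :: "('s \<Rightarrow> 'a list \<Rightarrow> 'a) \<Rightarrow> ('v \<Rightarrow> 'a) \<Rightarrow> ('s,'v) trm \<Rightarrow> 'a" where
  "eval fi s (Var x) = s x"
| "eval fi s (Fn f ts) = fi f (map (eval fi s) ts)"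

fun sat :: "'a set \<Rightarrow> ('s \<Rightarrow> 'a list \<Rightarrow> 'a) \<Rightarrow> ('ps \<Rightarrow> 'a list \<Rightarrow> bool) \<Rightarrow> ('v \<Rightarrow> 'a)
            \<Rightarrow> ('s,'ps,'v) fm \<Rightarrow> bool" where
  "sat D fi pi s (Atom p ts) = pi p (map (eval fi s) ts)"
| "sat D fi pi s (Neg \<phi>) = (\<not> sat D fi pi s \<phi>)"
| "sat D fi pi s (Conj \<phi> \<psi>) = (sat D fi pi s \<phi> \<and> sat D fi pi s \<psi>)"
| "sat D fi pi s (All x \<phi>) = (\<forall>d\<in>D. sat D fi pi (s(x := d)) \<phi>)"

definition is_structure :: "'v set \<Rightarrow> ('f \<Rightarrow> nat) \<Rightarrow> ('p \<Rightarrow> nat) \<Rightarrow> 'a set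
      \<Rightarrow> (('f,'p,'v) fsym \<Rightarrow> 'a list \<Rightarrow> 'a) \<Rightarrow> bool" where
  "is_structure V arF arP D fi \<longleftrightarrow> D \<noteq> {} \<and>
     (\<forall>f args. sym_ok V f \<longrightarrow> length args = arity_f arF arP f \<longrightarrow> set args \<subseteq> D \<longrightarrow> fi f args \<in> D)"

definition coherent :: "'a itself \<Rightarrow> 'v set \<Rightarrow> ('f \<Rightarrow> nat) \<Rightarrow> ('p \<Rightarrow> nat)
      \<Rightarrow> ('f,'p,'v) form set \<Rightarrow> bool" where
  "coherent _ V arF arP H \<longleftrightarrow>
     (\<exists>(D::'a set) fi pi s. is_structure V arF arP D fi \<and> range s \<subseteq> D \<and>
        (\<forall>\<phi>\<in>H. sat D fi pi s \<phi>))"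

end

theory Submission
  imports Defs
begin

text \<open>Pair every element of a model of the T-free theory with a term of S, interpreting the
term component freely. A quotation term then evaluates to itself in that component, and since
quotation is injective the formula it quotes can be read off; T is interpreted as truth of that
formula in the original model. Projection onto the first component is a surjective homomorphism
for all other symbols, so the T-free formulas keep their truth values.\<close>

lemma inj_mu_tm: "inj mu_tm"
proof (rule injI)
  show "mu_tm t = mu_tm u \<Longrightarrow> t = u" for t u :: "('f,'p,'v) tm"
    by (induction t arbitrary: u rule: mu_tm.induct; case_tac u rule: mu_tm.cases)
      (simp_all, metis list.inj_map_strong)
qed

lemma inj_mu_fm: "inj mu_fm"
proof (rule injI)
  show "mu_fm \<phi> = mu_fm \<psi> \<Longrightarrow> \<phi> = \<psi>" for \<phi> \<psi> :: "('f,'p,'v) form"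
    by (induction \<phi> arbitrary: \<psi>; case_tac \<psi>) (simp_all add: inj_map_eq_map[OF inj_mu_tm])
qed

lemma Lq_no_T: "Lq V arF arP \<phi> \<Longrightarrow> no_T \<phi>"
  by (induction \<phi> rule: Tq_Lq.inducts(2)[where ?P1.0 = "\<lambda>_. True"]) auto

lemma eval_Fn_Var: "eval Fn Var t = t"
  by (induction t) (simp_all add: map_idI)

lemma eval_hom:
  assumes "\<And>f args. h (fi' f args) = fi f (map h args)"
  shows "h (eval fi' s' t) = eval fi (h \<circ> s') t"
  by (induction t) (simp_all add: assms comp_def cong: map_cong)

lemma sat_hom:
  assumes "no_T \<phi>" and "h ` D' = D"
    and "\<And>f args. h (fi' f args) = fi f (map h args)"
    and "\<And>p args. pi' (PB p) args = pi (PB p) (map h args)"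
  shows "sat D' fi' pi' s' \<phi> = sat D fi pi (h \<circ> s') \<phi>"
  using \<open>no_T \<phi>\<close>
proof (induction \<phi> arbitrary: s')
  case (Atom p ts)
  then obtain q where "p = PB q" by (cases p) auto
  then show ?case
    by (simp add: assms(4) eval_hom[of h fi' fi, OF assms(3)] comp_def)
next
  case (All x \<phi>)
  then have IH: "sat D' fi' pi' (s'(x := d)) \<phi> = sat D fi pi ((h \<circ> s')(x := h d)) \<phi>" for d
    by (simp only: no_T.simps fun_upd_comp)
  have "sat D' fi' pi' s' (All x \<phi>) = (\<forall>a\<in>h ` D'. sat D fi pi ((h \<circ> s')(x := a)) \<phi>)"
    by (simp add: IH)
  then show ?case
    by (simp add: \<open>h ` D' = D\<close> comp_def)
qed simp_all

definition tagged_fn :: "('s \<Rightarrow> 'a list \<Rightarrow> 'a) \<Rightarrow> 's \<Rightarrow> ('a \<times> ('s,'v) trm) list \<Rightarrow> 'a \<times> ('s,'v) trm"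
  where "tagged_fn fi f args = (fi f (map fst args), Fn f (map snd args))"

definition tagged_asg :: "('v \<Rightarrow> 'a) \<Rightarrow> 'v \<Rightarrow> 'a \<times> ('s,'v) trm"
  where "tagged_asg s x = (s x, Var x)"

lemma snd_eval_tagged: "snd (eval (tagged_fn fi) (tagged_asg s) t) = t"
  using eval_hom[of snd "tagged_fn fi" Fn "tagged_asg s" t]
  by (simp add: tagged_fn_def tagged_asg_def comp_def eval_Fn_Var)

lemma is_structure_tagged:
  fixes fi :: "('f,'p,'v) fsym \<Rightarrow> 'a list \<Rightarrow> 'a"
  assumes "is_structure V arF arP D fi"
  shows "is_structure V arF arP (D \<times> (UNIV :: ('f,'p,'v) tm set)) (tagged_fn fi)"
  unfolding is_structure_def
proof (intro conjI allI impI)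
  show "D \<times> UNIV \<noteq> {}"
    using assms by (simp add: is_structure_def)
next
  fix f and args :: "('a \<times> ('f,'p,'v) tm) list"
  assume "sym_ok V f" "length args = arity_f arF arP f" "set args \<subseteq> D \<times> UNIV"
  moreover have "set (map fst args) \<subseteq> D"
    using \<open>set args \<subseteq> D \<times> UNIV\<close> by auto
  ultimately have "fi f (map fst args) \<in> D"
    using assms by (simp add: is_structure_def)
  then show "tagged_fn fi f args \<in> D \<times> UNIV"
    by (simp add: tagged_fn_def)
qed

definition truth_extension ::
    "'a set \<Rightarrow> (('f,'p,'v) fsym \<Rightarrow> 'a list \<Rightarrow> 'a) \<Rightarrow> ('p pred \<Rightarrow> 'a list \<Rightarrow> bool) \<Rightarrow> ('v \<Rightarrow> 'a)
      \<Rightarrow> 'p pred \<Rightarrow> ('a \<times> ('f,'p,'v) tm) list \<Rightarrow> bool"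
  where "truth_extension D fi pi s p args =
    (case p of
      PB q \<Rightarrow> pi (PB q) (map fst args)
    | PT \<Rightarrow> (\<exists>\<psi>. map snd args = [mu_fm \<psi>] \<and> no_T \<psi> \<and> sat D fi pi s \<psi>))"

lemma sat_truth_extension_no_T:
  assumes "no_T \<phi>"
  shows "sat (D \<times> UNIV) (tagged_fn fi) (truth_extension D fi pi s) (tagged_asg s) \<phi>
    = sat D fi pi s \<phi>"
  using sat_hom[of \<phi> fst "D \<times> UNIV" D "tagged_fn fi" fi "truth_extension D fi pi s" pi "tagged_asg s"]
  by (simp add: assms tagged_fn_def truth_extension_def tagged_asg_def comp_def)

lemma sat_truth_extension_Tschema:
  assumes "\<phi> \<in> Tschema V arF arP"
  shows "sat (D \<times> UNIV) (tagged_fn fi) (truth_extension D fi pi s) (tagged_asg s) \<phi>"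
proof -
  from assms obtain \<chi> where \<phi>: "\<phi> = iff_fm (Atom PT [mu_fm \<chi>]) \<chi>" and "no_T \<chi>"
    unfolding Tschema_def using Lq_no_T by blast
  have "truth_extension D fi pi s PT [eval (tagged_fn fi) (tagged_asg s) (mu_fm \<chi>)]
      = (\<exists>\<psi>. mu_fm \<chi> = mu_fm \<psi> \<and> no_T \<psi> \<and> sat D fi pi s \<psi>)"
    by (simp add: truth_extension_def snd_eval_tagged)
  also have "\<dots> = sat D fi pi s \<chi>"
    using \<open>no_T \<chi>\<close> injD[OF inj_mu_fm] by blast
  finally show ?thesis
    unfolding \<phi> iff_fm_def by (simp add: sat_truth_extension_no_T[OF \<open>no_T \<chi>\<close>])
qed

theorem proposition5p1:
  fixes V :: "'v set" and arF :: "'f \<Rightarrow> nat" and arP :: "'p \<Rightarrow> nat"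
    and Hm :: "('f,'p,'v) form set"
  assumes "infinite (UNIV :: 'v set)"
    and "finite V"
    and "\<forall>\<phi>\<in>Hm. wf_fm V arF arP \<phi> \<and> no_T \<phi>"
    and "coherent TYPE('a) V arF arP Hm"
  shows "coherent TYPE('a \<times> ('f,'p,'v) tm) V arF arP (Hm \<union> Tschema V arF arP)"
proof -
  obtain D :: "'a set" and fi pi s where "is_structure V arF arP D fi" and "range s \<subseteq> D"
    and model: "\<forall>\<phi>\<in>Hm. sat D fi pi s \<phi>"
    using assms(4) unfolding coherent_def by blast
  let ?pi = "truth_extension D fi pi s" and ?s = "tagged_asg s :: 'v \<Rightarrow> 'a \<times> ('f,'p,'v) tm"
  have "\<forall>\<phi>\<in>Hm \<union> Tschema V arF arP. sat (D \<times> UNIV) (tagged_fn fi) ?pi ?s \<phi>"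
    using model assms(3) sat_truth_extension_no_T sat_truth_extension_Tschema by blast
  moreover have "range ?s \<subseteq> D \<times> UNIV"
    using \<open>range s \<subseteq> D\<close> by (auto simp: tagged_asg_def)
  ultimately show ?thesis
    unfolding coherent_def using is_structure_tagged[OF \<open>is_structure V arF arP D fi\<close>] by blast
qed

end
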